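(* Let $N\ge1$ and let $\tilde\Phi:\mathbb{R}^N\to\mathbb{R}$ be a twice differentiable convex function with $\nabla\tilde\Phi(G)\in\Delta_N$ and $\nabla_i\tilde\Phi(G)>0$ for all $G$ and $i$. Suppose that for constants $C,\gamma>0$, $\tilde\Phi$ is $(\gamma,C)$-differentially-consistent, i.e. for all $G\in(-\infty,0]^N$ and all $i$, $\nabla^2_{ii}\tilde\Phi(G)\le C(\nabla_i\tilde\Phi(G))^\gamma$. Consider one round $t$ of GBPA$(\tilde\Phi)$ with loss vector $g_t\in[-1,0]^N$ and current estimate $\hat G_{t-1}\in(-\infty,0]^N$. Then \[\mathbb{E}_{i_t}\big[D_{\tilde\Phi}(\hat G_t,\hat G_{t-1})\,\big|\,\hat G_{t-1}\big]\le\frac{C}{2}\sum_{i=1}^N\big(\nabla_i\tilde\Phi(\hat G_{t-1})\big)^{\gamma-1}.\]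
   Context: $\Delta_N$ is the probability simplex in $\mathbb{R}^N$, $e_i$ the $i$-th standard basis vector. One round of GBPA$(\tilde\Phi)$ at time $t$: given $\hat G_{t-1}$, sample $i_t$ with probability $p_{t,i}=\nabla_i\tilde\Phi(\hat G_{t-1})$, observe $g_{t,i_t}$, set $\hat G_t=\hat G_{t-1}+\frac{g_{t,i_t}}{p_{t,i_t}}e_{i_t}$ (the algorithm starts from $\hat G_0=0$, so all $\hat G_t$ lie in $(-\infty,0]^N$). $D_{\tilde\Phi}(x,y)=\tilde\Phi(x)-\tilde\Phi(y)-\langle\nabla\tilde\Phi(y),x-y\rangle$ is the Bregman divergence; $\nabla_i$ and $\nabla^2_{ii}$ denote first and second partial derivatives in coordinate $i$. *)

theory Defs
  imports "HOL-Analysis.Analysis"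
begin

definition bregman :: "(real^'n::finite \<Rightarrow> real) \<Rightarrow> (real^'n \<Rightarrow> real^'n) \<Rightarrow> real^'n \<Rightarrow> real^'n \<Rightarrow> real"
  where "bregman Phi grad x y = Phi x - Phi y - inner (grad y) (x - y)"

definition gbpa_update :: "(real^'n \<Rightarrow> real^'n) \<Rightarrow> real^'n \<Rightarrow> real^'n \<Rightarrow> 'n::finite \<Rightarrow> real^'n"
  where "gbpa_update grad G g i = G + (g $ i / grad G $ i) *\<^sub>R axis i 1"

end

theory Submission
  imports Defs
begin

text \<open>When coordinate i is sampled, the update moves Ghat along the line s \<mapsto> Ghat + s e_i to
  s = h = g_i / p_i \<le> 0, and the Bregman divergence is the remainder of the first-order Taylor
  expansion of s \<mapsto> Phi (Ghat + s e_i) at 0. Convexity makes the i-th partial derivative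
  nondecreasing along the line, so on [h, 0] it stays below p_i, while the segment stays in the
  nonpositive orthant; differential consistency therefore bounds the second derivative there by
  C p_i^\<gamma>. Hence the divergence is at most C p_i^\<gamma> h^2 / 2 \<le> C p_i^(\<gamma>-2) / 2, and weighting by
  p_i and summing gives the claim.\<close>

lemma has_vector_derivative_along_line:
  fixes F :: "'a::real_normed_vector \<Rightarrow> 'b::real_normed_vector"
  assumes "(F has_derivative F') (at (a + s *\<^sub>R v))"
  shows "((\<lambda>s. F (a + s *\<^sub>R v)) has_vector_derivative F' v) (at s)"
proof -
  have "((\<lambda>s. a + s *\<^sub>R v) has_derivative (\<lambda>t. t *\<^sub>R v)) (at s)"
    by (auto intro!: derivative_eq_intros)
  from has_derivative_compose[OF this assms]
  show ?thesis
    using linear_scale[OF has_derivative_linear[OF assms]]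
    by (simp add: has_vector_derivative_def)
qed

lemma convex_on_line:
  fixes f :: "'a::real_vector \<Rightarrow> real"
  assumes "convex_on UNIV f"
  shows "convex_on UNIV (\<lambda>s. f (a + s *\<^sub>R v))"
proof (rule convex_onI)
  fix t x y :: real
  assume "0 < t" "t < 1"
  have "a + ((1 - t) *\<^sub>R x + t *\<^sub>R y) *\<^sub>R v = (1 - t) *\<^sub>R (a + x *\<^sub>R v) + t *\<^sub>R (a + y *\<^sub>R v)"
    by (simp add: algebra_simps)
  with convex_onD[OF assms, of t "a + x *\<^sub>R v" "a + y *\<^sub>R v"] \<open>0 < t\<close> \<open>t < 1\<close>
  show "f (a + ((1 - t) *\<^sub>R x + t *\<^sub>R y) *\<^sub>R v) \<le> (1 - t) * f (a + x *\<^sub>R v) + t * f (a + y *\<^sub>R v)"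
    by simp
qed (simp add: convex_UNIV)

lemma convex_on_deriv_mono:
  fixes f f' :: "real \<Rightarrow> real"
  assumes "convex_on UNIV f"
    and "\<And>s. (f has_real_derivative f' s) (at s)"
    and "s \<le> t"
  shows "f' s \<le> f' t"
proof -
  have "f t - f s \<ge> f' s * (t - s)" "f s - f t \<ge> f' t * (s - t)"
    using assms(1,2) by (auto intro!: convex_on_imp_above_tangent)
  then have "(t - s) * (f' t - f' s) \<ge> 0"
    by (simp add: algebra_simps)
  with \<open>s \<le> t\<close> show ?thesis
    by (cases "s = t") (auto simp: zero_le_mult_iff)
qed

lemma second_order_expansion_le_left:
  fixes f f' f'' :: "real \<Rightarrow> real"
  assumes "h \<le> 0"
    and f': "\<And>s. h \<le> s \<Longrightarrow> s \<le> 0 \<Longrightarrow> (f has_real_derivative f' s) (at s)"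
    and f'': "\<And>s. h \<le> s \<Longrightarrow> s \<le> 0 \<Longrightarrow> (f' has_real_derivative f'' s) (at s)"
    and bound: "\<And>s. h \<le> s \<Longrightarrow> s \<le> 0 \<Longrightarrow> f'' s \<le> K"
  shows "f h - f 0 - f' 0 * h \<le> K * h\<^sup>2 / 2"
proof (cases "h = 0")
  case False
  define diff :: "nat \<Rightarrow> real \<Rightarrow> real" where "diff m = [f, f', f''] ! min m 2" for m
  have "\<forall>m t. m < 2 \<and> h \<le> t \<and> t \<le> 0 \<longrightarrow> (diff m has_real_derivative diff (Suc m) t) (at t)"
    using f' f'' by (auto simp: diff_def less_2_cases_iff)
  with False \<open>h \<le> 0\<close> obtain t where t: "h < t" "t < 0"
    and expansion: "f h = (\<Sum>m<2. diff m 0 / fact m * h ^ m) + diff 2 t / fact 2 * h\<^sup>2"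
    using Maclaurin_minus[of h 2 diff f] by (auto simp: diff_def)
  have "f h - f 0 - f' 0 * h = f'' t * h\<^sup>2 / 2"
    using expansion by (simp add: diff_def numeral_2_eq_2)
  also have "\<dots> \<le> K * h\<^sup>2 / 2"
    using bound[of t] t by (intro divide_right_mono mult_right_mono) auto
  finally show ?thesis .
qed simp

lemma bregman_axis_step_le:
  fixes Phi :: "real^'n::finite \<Rightarrow> real"
    and grad :: "real^'n \<Rightarrow> real^'n"
    and hess :: "real^'n \<Rightarrow> real^'n \<Rightarrow> real^'n"
  assumes grad_deriv: "\<And>x. (Phi has_derivative (\<lambda>h. inner (grad x) h)) (at x)"
    and hess_deriv: "\<And>x. (grad has_derivative hess x) (at x)"
    and convex: "convex_on UNIV Phi"
    and grad_nonneg: "\<And>x. grad x $ i \<ge> 0"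
    and consistent: "\<And>x. (\<forall>j. x $ j \<le> 0) \<Longrightarrow> hess x (axis i 1) $ i \<le> C * (grad x $ i) powr \<gamma>"
    and "C \<ge> 0" and "\<gamma> \<ge> 0"
    and G_nonpos: "\<And>j. G $ j \<le> 0"
    and "h \<le> 0"
  shows "bregman Phi grad (G + h *\<^sub>R axis i 1) G \<le> C * (grad G $ i) powr \<gamma> * h\<^sup>2 / 2"
proof -
  define f where "f = (\<lambda>s. Phi (G + s *\<^sub>R axis i 1))"
  define f' where "f' = (\<lambda>s. grad (G + s *\<^sub>R axis i 1) $ i)"
  define f'' where "f'' = (\<lambda>s. hess (G + s *\<^sub>R axis i 1) (axis i 1) $ i)"
  have f': "(f has_real_derivative f' s) (at s)" for s
    using has_vector_derivative_along_line[where a = G and v = "axis i 1", OF grad_deriv]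
    by (simp add: f_def f'_def has_real_derivative_iff_has_vector_derivative inner_axis)
  have f'': "(f' has_real_derivative f'' s) (at s)" for s
    using has_vector_derivative_along_line[OF bounded_linear.has_derivative[OF bounded_linear_vec_nth hess_deriv]]
    by (simp add: f'_def f''_def has_real_derivative_iff_has_vector_derivative)
  have f_convex: "convex_on UNIV f"
    unfolding f_def by (rule convex_on_line[OF convex])
  have "f'' s \<le> C * (grad G $ i) powr \<gamma>" if "h \<le> s" "s \<le> 0" for s
  proof -
    have "\<forall>j. (G + s *\<^sub>R axis i 1) $ j \<le> 0"
      using G_nonpos \<open>s \<le> 0\<close> by (auto simp: axis_def add_nonpos_nonpos)
    then have "f'' s \<le> C * f' s powr \<gamma>"
      unfolding f''_def f'_def by (rule consistent)
    also have "\<dots> \<le> C * f' 0 powr \<gamma>"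
      using convex_on_deriv_mono[OF f_convex f' \<open>s \<le> 0\<close>]
        \<open>C \<ge> 0\<close> \<open>\<gamma> \<ge> 0\<close> grad_nonneg
      by (intro mult_left_mono powr_mono2) (auto simp: f_def f'_def)
    finally show ?thesis
      by (simp add: f'_def)
  qed
  with second_order_expansion_le_left[OF \<open>h \<le> 0\<close> f' f'']
  have "f h - f 0 - f' 0 * h \<le> C * (grad G $ i) powr \<gamma> * h\<^sup>2 / 2"
    by blast
  then show ?thesis
    by (simp add: bregman_def f_def f'_def inner_axis mult.commute)
qed

theorem theorem1:
  fixes Phi :: "real^'n::finite \<Rightarrow> real"
    and grad :: "real^'n \<Rightarrow> real^'n"
    and hess :: "real^'n \<Rightarrow> real^'n \<Rightarrow> real^'n"
    and C \<gamma> :: real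
    and g Ghat :: "real^'n"
  assumes grad_deriv: "\<And>x. (Phi has_derivative (\<lambda>h. inner (grad x) h)) (at x)"
    and hess_deriv: "\<And>x. (grad has_derivative hess x) (at x)"
    and convex: "convex_on UNIV Phi"
    and grad_pos: "\<And>G i. grad G $ i > 0"
    and grad_simplex: "\<And>G. (\<Sum>i\<in>UNIV. grad G $ i) = 1"
    and C_pos: "C > 0" and gamma_pos: "\<gamma> > 0"
    and diff_consistent: "\<And>G i. (\<forall>j. G $ j \<le> 0) \<Longrightarrow>
            hess G (axis i 1) $ i \<le> C * (grad G $ i) powr \<gamma>"
    and g_range: "\<And>i. -1 \<le> g $ i \<and> g $ i \<le> 0"
    and Ghat_nonpos: "\<And>i. Ghat $ i \<le> 0"
  shows "(\<Sum>i\<in>UNIV. grad Ghat $ i * bregman Phi grad (gbpa_update grad Ghat g i) Ghat)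
           \<le> C / 2 * (\<Sum>i\<in>UNIV. (grad Ghat $ i) powr (\<gamma> - 1))"
proof -
  have "grad Ghat $ i * bregman Phi grad (gbpa_update grad Ghat g i) Ghat
      \<le> C / 2 * (grad Ghat $ i) powr (\<gamma> - 1)" for i
  proof -
    define p where "p = grad Ghat $ i"
    have "p > 0" "(g $ i)\<^sup>2 \<le> 1" "g $ i / p \<le> 0"
      using grad_pos g_range[of i] by (auto simp: p_def abs_square_le_1 divide_nonpos_pos)
    with bregman_axis_step_le[OF grad_deriv hess_deriv convex less_imp_le[OF grad_pos]
        diff_consistent _ _ Ghat_nonpos] C_pos gamma_pos
    have "p * bregman Phi grad (gbpa_update grad Ghat g i) Ghat \<le> p * (C * p powr \<gamma> * (g $ i / p)\<^sup>2 / 2)"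
      by (intro mult_left_mono) (auto simp: gbpa_update_def p_def)
    also have "\<dots> = C / 2 * p powr (\<gamma> - 1) * (g $ i)\<^sup>2"
      using \<open>p > 0\<close> by (simp add: powr_diff power2_eq_square field_simps)
    also have "\<dots> \<le> C / 2 * p powr (\<gamma> - 1)"
      using \<open>(g $ i)\<^sup>2 \<le> 1\<close> C_pos by (intro mult_left_le) auto
    finally show ?thesis
      by (simp add: p_def)
  qed
  then show ?thesis
    by (simp add: sum_distrib_left sum_mono)
qed

end
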